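(* Every locally fair Pagerank algorithm is $\phi$-fair, i.e., its pagerank vector $\mathbf{p}$ satisfies $\sum_{j\in R}\mathbf{p}[j] = \phi$.
   Context: Let $G=(V,E)$ be a graph whose node set is partitioned into a protected (red) group $R\subseteq V$ and a blue group $B = V\setminus R$, and let $\phi\in(0,1)$. A Pagerank algorithm on $G$ is specified by a row-stochastic transition matrix $\mathbf{P}$ over $V$, a jump (restart) probability $\gamma\in(0,1)$, and a jump vector $\mathbf{v}$ that is a probability distribution over $V$; its pagerank vector $\mathbf{p}$ is the probability distribution satisfying $\mathbf{p}^T = (1-\gamma)\mathbf{p}^T\mathbf{P} + \gamma\,\mathbf{v}^T$. Such an algorithm is called $\phi$-fair if the total pagerank mass it assigns to the red nodes equals $\phi$. The algorithm is called locally fair if every row of its transition matrix is $\phi$-fair, i.e., $\sum_{j\in R}\mathbf{P}[i,j] = \phi$ for every node $i\in V$, and its jump vector is $\phi$-fair, i.e., $\sum_{j\in R}\mathbf{v}[j] = \phi$. (Examples include transition matrices in which each node sends probability $\phi$ to red nodes and $1-\phi$ to blue nodes, either split among its neighbors of each color or partly via a "residual" redirected to the underrepresented color, combined with the jump vector giving $\phi/|R|$ to each red node and $(1-\phi)/|B|$ to each blue node.) *)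

theory Defs
  imports Complex_Main
begin

text \<open>Nodes are a finite set V; vectors and matrices over V are real-valued
functions (values outside V are irrelevant). R \<subseteq> V is the red group.\<close>

definition prob_dist :: "'a set \<Rightarrow> ('a \<Rightarrow> real) \<Rightarrow> bool" where
  "prob_dist V x \<longleftrightarrow> (\<forall>i\<in>V. 0 \<le> x i) \<and> (\<Sum>i\<in>V. x i) = 1"

definition row_stochastic :: "'a set \<Rightarrow> ('a \<Rightarrow> 'a \<Rightarrow> real) \<Rightarrow> bool" where
  "row_stochastic V P \<longleftrightarrow> (\<forall>i\<in>V. prob_dist V (P i))"

definition is_pagerank_vector ::
  "'a set \<Rightarrow> ('a \<Rightarrow> 'a \<Rightarrow> real) \<Rightarrow> real \<Rightarrow> ('a \<Rightarrow> real) \<Rightarrow> ('a \<Rightarrow> real) \<Rightarrow> bool" where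
  "is_pagerank_vector V P \<gamma> v p \<longleftrightarrow> prob_dist V p \<and>
     (\<forall>j\<in>V. p j = (1 - \<gamma>) * (\<Sum>i\<in>V. p i * P i j) + \<gamma> * v j)"

definition pagerank_algorithm ::
  "'a set \<Rightarrow> ('a \<Rightarrow> 'a \<Rightarrow> real) \<Rightarrow> real \<Rightarrow> ('a \<Rightarrow> real) \<Rightarrow> bool" where
  "pagerank_algorithm V P \<gamma> v \<longleftrightarrow> row_stochastic V P \<and> 0 < \<gamma> \<and> \<gamma> < 1 \<and> prob_dist V v"

definition phi_fair_vec :: "'a set \<Rightarrow> real \<Rightarrow> ('a \<Rightarrow> real) \<Rightarrow> bool" where
  "phi_fair_vec R \<phi> x \<longleftrightarrow> (\<Sum>j\<in>R. x j) = \<phi>"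

definition locally_fair ::
  "'a set \<Rightarrow> 'a set \<Rightarrow> real \<Rightarrow> ('a \<Rightarrow> 'a \<Rightarrow> real) \<Rightarrow> ('a \<Rightarrow> real) \<Rightarrow> bool" where
  "locally_fair V R \<phi> P v \<longleftrightarrow> (\<forall>i\<in>V. phi_fair_vec R \<phi> (P i)) \<and> phi_fair_vec R \<phi> v"

end

theory Submission
  imports Defs
begin

text \<open>Summing the fixed-point equation over the red nodes and exchanging the two sums,
  every node i passes exactly the fraction \<phi> of its mass p i on to the red group, so the
  red mass of p is (1 - \<gamma>) \<phi> (\<Sum>i\<in>V. p i) + \<gamma> \<phi> = \<phi>.\<close>

lemma sum_vector_matrix_rows_mass:
  fixes x :: "'a \<Rightarrow> 'b::comm_semiring_0"
  assumes "\<And>i. i \<in> V \<Longrightarrow> (\<Sum>j\<in>S. P i j) = c"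
  shows "(\<Sum>j\<in>S. \<Sum>i\<in>V. x i * P i j) = c * (\<Sum>i\<in>V. x i)"
proof -
  have "(\<Sum>j\<in>S. \<Sum>i\<in>V. x i * P i j) = (\<Sum>i\<in>V. \<Sum>j\<in>S. x i * P i j)"
    by (rule sum.swap)
  also have "\<dots> = (\<Sum>i\<in>V. x i * (\<Sum>j\<in>S. P i j))"
    by (simp add: sum_distrib_left)
  also have "\<dots> = c * (\<Sum>i\<in>V. x i)"
    by (simp add: assms sum_distrib_left mult.commute)
  finally show ?thesis .
qed

lemma locally_fair_pagerank_vector_fair:
  assumes "R \<subseteq> V"
    and "locally_fair V R \<phi> P v"
    and "is_pagerank_vector V P \<gamma> v p"
  shows "phi_fair_vec R \<phi> p"
proof -
  have rows: "\<And>i. i \<in> V \<Longrightarrow> (\<Sum>j\<in>R. P i j) = \<phi>"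
   and jump: "(\<Sum>j\<in>R. v j) = \<phi>"
    using assms(2) by (auto simp: locally_fair_def phi_fair_vec_def)
  have fixed_point: "\<And>j. j \<in> V \<Longrightarrow> p j = (1 - \<gamma>) * (\<Sum>i\<in>V. p i * P i j) + \<gamma> * v j"
   and total: "(\<Sum>i\<in>V. p i) = 1"
    using assms(3) by (auto simp: is_pagerank_vector_def prob_dist_def)
  have "(\<Sum>j\<in>R. p j) = (\<Sum>j\<in>R. (1 - \<gamma>) * (\<Sum>i\<in>V. p i * P i j) + \<gamma> * v j)"
    using assms(1) fixed_point by (intro sum.cong) auto
  also have "\<dots> = (1 - \<gamma>) * (\<Sum>j\<in>R. \<Sum>i\<in>V. p i * P i j) + \<gamma> * (\<Sum>j\<in>R. v j)"
    by (simp add: sum.distrib sum_distrib_left)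
  also have "\<dots> = (1 - \<gamma>) * \<phi> + \<gamma> * \<phi>"
    by (simp add: sum_vector_matrix_rows_mass[OF rows] total jump)
  finally show ?thesis
    by (simp add: phi_fair_vec_def algebra_simps)
qed

theorem theorem4p1:
  fixes V R :: "'a set" and \<phi> \<gamma> :: real
    and P :: "'a \<Rightarrow> 'a \<Rightarrow> real" and v p :: "'a \<Rightarrow> real"
  assumes "finite V" and "R \<subseteq> V"
    and "0 < \<phi>" and "\<phi> < 1"
    and "pagerank_algorithm V P \<gamma> v"
    and "locally_fair V R \<phi> P v"
    and "is_pagerank_vector V P \<gamma> v p"
  shows "phi_fair_vec R \<phi> p"
  using assms(2,6,7) by (rule locally_fair_pagerank_vector_fair)

end
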